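(* Let $1\le p\le 2$, let $X$ and $Y$ be Banach spaces such that $X$ has type $p$, and let $u:X\to Y$ be a continuous linear operator. If the adjoint $u^*:Y^*\to X^*$ is almost $p^*$-summing (where $\frac1p+\frac1{p^*}=1$), then $u$ is Cohen strongly $p$-summing, i.e. $(u(x_i))_{i=1}^\infty\in\ell_p\langle Y\rangle$ whenever $(x_i)_{i=1}^\infty\in\ell_p(X)$.
   Context: $r_i$ denote the Rademacher functions. A Banach space $X$ has type $p$ if there is $C\ge0$ with $\left(\int_0^1\left\|\sum_{i=1}^m r_i(t)x_i\right\|^2dt\right)^{1/2}\le C\left(\sum_{i=1}^m\|x_i\|^p\right)^{1/p}$ for all $m$ and $x_1,\dots,x_m\in X$. For $1\le s\le\infty$, $\|(x_i)\|_{w,s}:=\sup_{x^*\in B_{X^*}}\|(x^*(x_i))_i\|_s$ and $\ell_s^w(X)$ is the space of sequences where this is finite. $\ell_p\langle Y\rangle$ is the space of sequences $(y_i)\subset Y$ with $\sup\{\sum_i|y_i^*(y_i)|:(y_i^* )\in B_{\ell_{p^*}^w(Y^* )}\}<\infty$. An operator $v\in\mathcal L(E,F)$ is almost $s$-summing if there is $C\ge0$ with $\left(\int_0^1\left\|\sum_{i=1}^m r_i(t)v(x_i)\right\|^2dt\right)^{1/2}\le C\|(x_i)_{i=1}^m\|_{w,s}$ for all $m$ and $x_1,\dots,x_m\in E$. *)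

theory Defs
  imports "HOL-Analysis.Analysis"
begin

definition rademacher :: "nat \<Rightarrow> real \<Rightarrow> real" where
  "rademacher i t = sgn (sin (2 ^ i * pi * t))"

definition rad_avg :: "(nat \<Rightarrow> 'a::real_normed_vector) \<Rightarrow> nat \<Rightarrow> real" where
  "rad_avg x m = sqrt (integral {0..1} (\<lambda>t. (norm (\<Sum>i=1..m. rademacher i t *\<^sub>R x i))\<^sup>2))"

definition seq_norm :: "ereal \<Rightarrow> (nat \<Rightarrow> real) \<Rightarrow> ereal" where
  "seq_norm s a =
     (if s = \<infinity> then (SUP i. ereal \<bar>a i\<bar>)
      else if summable (\<lambda>i. \<bar>a i\<bar> powr real_of_ereal s)
        then ereal ((\<Sum>i. \<bar>a i\<bar> powr real_of_ereal s) powr (1 / real_of_ereal s))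
        else \<infinity>)"

definition weak_norm :: "ereal \<Rightarrow> (nat \<Rightarrow> 'a::real_normed_vector) \<Rightarrow> ereal" where
  "weak_norm s x = (SUP f\<in>{f :: 'a \<Rightarrow>\<^sub>L real. norm f \<le> 1}. seq_norm s (\<lambda>i. blinfun_apply f (x i)))"

definition conj_exp :: "real \<Rightarrow> ereal" where
  "conj_exp p = (if p = 1 then \<infinity> else ereal (p / (p - 1)))"

definition has_type :: "'a::real_normed_vector itself \<Rightarrow> real \<Rightarrow> bool" where
  "has_type _ p \<longleftrightarrow> (\<exists>C\<ge>0. \<forall>m (x :: nat \<Rightarrow> 'a).
      rad_avg x m \<le> C * (\<Sum>i=1..m. norm (x i) powr p) powr (1 / p))"

definition almost_summing :: "ereal \<Rightarrow> ('a::real_normed_vector \<Rightarrow> 'b::real_normed_vector) \<Rightarrow> bool" where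
  "almost_summing s v \<longleftrightarrow> (\<exists>C\<ge>0. \<forall>m (x :: nat \<Rightarrow> 'a).
      ereal (rad_avg (\<lambda>i. v (x i)) m) \<le> ereal C * weak_norm s (\<lambda>i. if i \<in> {1..m} then x i else 0))"

definition in_lp :: "real \<Rightarrow> (nat \<Rightarrow> 'a::real_normed_vector) \<Rightarrow> bool" where
  "in_lp p x \<longleftrightarrow> summable (\<lambda>i. norm (x i) powr p)"

definition in_cohen_lp :: "real \<Rightarrow> (nat \<Rightarrow> 'b::real_normed_vector) \<Rightarrow> bool" where
  "in_cohen_lp p y \<longleftrightarrow>
     (SUP ys\<in>{ys :: nat \<Rightarrow> ('b \<Rightarrow>\<^sub>L real). weak_norm (conj_exp p) ys \<le> 1}.
        (if summable (\<lambda>i. \<bar>blinfun_apply (ys i) (y i)\<bar>)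
         then ereal (\<Sum>i. \<bar>blinfun_apply (ys i) (y i)\<bar>) else \<infinity>)) < \<infinity>"

definition cohen_strongly_summing :: "real \<Rightarrow> ('a::real_normed_vector \<Rightarrow>\<^sub>L 'b::real_normed_vector) \<Rightarrow> bool" where
  "cohen_strongly_summing p u \<longleftrightarrow>
     (\<forall>x. in_lp p x \<longrightarrow> in_cohen_lp p (\<lambda>i. blinfun_apply u (x i)))"

end

theory Submission
  imports Defs
begin

text \<open>Orthogonality of the Rademacher functions and Cauchy-Schwarz in \<open>L\<^sup>2[0,1]\<close> give the
  duality estimate \<open>\<Sum>\<^sub>i a\<^sub>i(b\<^sub>i) \<le> rad(a) rad(b)\<close> for functionals \<open>a\<^sub>i\<close> and vectors \<open>b\<^sub>i\<close>.
  For \<open>(x\<^sub>i) \<in> \<ell>\<^sub>p(X)\<close> and \<open>(y\<^sub>i\<^sup>*)\<close> in the unit ball of weak \<open>\<ell>\<^sub>p\<^sub>*(Y\<^sup>*)\<close> take \<open>a\<^sub>i = u\<^sup>* y\<^sub>i\<^sup>*\<close> and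
  \<open>b\<^sub>i = \<plusminus>x\<^sub>i\<close>, with signs making \<open>a\<^sub>i(b\<^sub>i) = |y\<^sub>i\<^sup>*(u x\<^sub>i)|\<close>: almost \<open>p\<^sup>*\<close>-summability of \<open>u\<^sup>*\<close>
  bounds \<open>rad(a)\<close>, type \<open>p\<close> bounds \<open>rad(b)\<close> by the \<open>\<ell>\<^sub>p\<close>-norm of \<open>(x\<^sub>i)\<close>, so the partial sums
  of \<open>\<Sum>\<^sub>i |y\<^sub>i\<^sup>*(u x\<^sub>i)|\<close> are bounded uniformly.\<close>

lemma sgn_sin_pi_mult:
  fixes y :: real and q :: nat
  assumes "real q < y" "y < real q + 1"
  shows "sgn (sin (pi * y)) = (-1) ^ q"
proof -
  define z where "z = y - real q"
  have z: "0 < z" "z < 1" using assms by (auto simp: z_def)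
  have "sin (pi * y) = sin (pi * z + real q * pi)" by (simp add: z_def algebra_simps)
  also have "\<dots> = (-1) ^ q * sin (pi * z)" by (simp add: sin_add)
  finally have "sin (pi * y) = (-1) ^ q * sin (pi * z)" .
  moreover have "0 < sin (pi * z)" using z by (intro sin_gt_zero) auto
  ultimately show ?thesis by (simp add: sgn_mult)
qed

definition dyadic_sign :: "nat \<Rightarrow> nat \<Rightarrow> real" where
  "dyadic_sign e k = (if bit k e then -1 else 1)"

lemma dyadic_sign_eq_minus_one_power: "dyadic_sign e k = (-1) ^ (k div 2 ^ e)"
  by (simp add: dyadic_sign_def bit_iff_odd minus_one_power_iff)

lemma dyadic_sign_mult_self [simp]: "dyadic_sign e k * dyadic_sign e k = 1"
  by (simp add: dyadic_sign_def)

lemma rademacher_eq_dyadic_sign: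
  fixes t :: real and k m i :: nat
  assumes "i \<le> m" "real k / 2 ^ m < t" "t < (real k + 1) / 2 ^ m"
  shows "rademacher i t = dyadic_sign (m - i) k"
proof -
  define d :: nat where "d = 2 ^ (m - i)"
  define q where "q = k div d"
  have d: "real d > 0" "(2::real) ^ m = 2 ^ i * real d"
    using assms(1) by (simp_all add: d_def flip: power_add)
  have t: "real k < (2 ^ i * t) * real d" "(2 ^ i * t) * real d < real k + 1"
    using assms(2,3) d by (simp_all add: field_simps)
  have "k = q * d + k mod d" "k mod d < d"
    using d(1) by (simp_all add: q_def)
  then have "q * d \<le> k" "k < (q + 1) * d"
    by simp_all
  then have "real q * real d \<le> real k" "real k + 1 \<le> (real q + 1) * real d"
    by (simp_all flip: of_nat_mult of_nat_add of_nat_1 of_nat_Suc)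
  with t have "real q * real d < (2 ^ i * t) * real d" "(2 ^ i * t) * real d < (real q + 1) * real d"
    by linarith+
  with d(1) have "real q < 2 ^ i * t" "2 ^ i * t < real q + 1"
    by simp_all
  then have "sgn (sin (pi * (2 ^ i * t))) = (-1) ^ q" by (rule sgn_sin_pi_mult)
  then show ?thesis
    by (simp add: rademacher_def dyadic_sign_eq_minus_one_power q_def d_def mult_ac)
qed

lemma has_integral_uniform_step_function:
  fixes f :: "real \<Rightarrow> real" and N :: nat
  assumes "N > 0"
    and step: "\<And>k t. k < N \<Longrightarrow> real k / N < t \<Longrightarrow> t < (real k + 1) / N \<Longrightarrow> f t = c k"
  shows "(f has_integral (\<Sum>k<N. c k) / N) {0..1}"
proof -
  have "(f has_integral (\<Sum>k<n. c k) / N) {0..real n / N}" if "n \<le> N" for n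
    using that
  proof (induction n)
    case 0
    show ?case using has_integral_null_real[of 0 0 f] by simp
  next
    case (Suc n)
    have "(f has_integral c n / N) {real n / N..(real n + 1) / N}"
    proof (rule has_integral_spike[where S="{real n / N, (real n + 1) / N}" and f="\<lambda>_. c n"])
      show "((\<lambda>_. c n) has_integral c n / N) {real n / N..(real n + 1) / N}"
        using has_integral_const_real[of "c n" "real n / N" "(real n + 1) / N"] assms(1)
        by (simp add: field_simps)
    qed (use Suc.prems step in auto)
    with Suc have "(f has_integral (\<Sum>k<n. c k) / N + c n / N) {0..(real n + 1) / N}"
      by (intro has_integral_combine) (auto simp: divide_right_mono)
    then show ?case by (simp add: add_divide_distrib add.commute)
  qed
  from this[of N] assms(1) show ?thesis by simp
qed

lemma rad_avg_eq_dyadic_average: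
  "rad_avg v m = sqrt ((\<Sum>k<2^m. (norm (\<Sum>i=1..m. dyadic_sign (m - i) k *\<^sub>R v i))\<^sup>2) / 2 ^ m)"
proof -
  have "((\<lambda>t. (norm (\<Sum>i=1..m. rademacher i t *\<^sub>R v i))\<^sup>2) has_integral
          (\<Sum>k<2^m. (norm (\<Sum>i=1..m. dyadic_sign (m - i) k *\<^sub>R v i))\<^sup>2) / real (2 ^ m)) {0..1}"
  proof (rule has_integral_uniform_step_function)
    fix k t assume "real k / real (2 ^ m) < t" "t < (real k + 1) / real (2 ^ m)"
    then have "(\<Sum>i=1..m. rademacher i t *\<^sub>R v i) = (\<Sum>i=1..m. dyadic_sign (m - i) k *\<^sub>R v i)"
      by (intro sum.cong refl) (simp add: rademacher_eq_dyadic_sign)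
    then show "(norm (\<Sum>i=1..m. rademacher i t *\<^sub>R v i))\<^sup>2
             = (norm (\<Sum>i=1..m. dyadic_sign (m - i) k *\<^sub>R v i))\<^sup>2"
      by simp
  qed simp
  then show ?thesis unfolding rad_avg_def by (simp add: integral_unique)
qed

lemma rad_avg_nonneg: "rad_avg v m \<ge> 0"
  unfolding rad_avg_eq_dyadic_average by (intro real_sqrt_ge_zero divide_nonneg_pos sum_nonneg) auto

text \<open>Flipping bit \<open>e\<close> is an involution of \<open>{..<2^m}\<close> that changes the sign of the summand.\<close>

lemma sum_dyadic_sign_mult:
  assumes "e < m" "f < m"
  shows "(\<Sum>k<2^m. dyadic_sign e k * dyadic_sign f k) = (if e = f then 2 ^ m else 0)"
proof (cases "e = f")
  case False
  define g where "g k = dyadic_sign e k * dyadic_sign f k" for k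
  define \<sigma> where "\<sigma> k = Bit_Operations.xor k (2 ^ e)" for k :: nat
  have bit_\<sigma>: "bit (\<sigma> k) n \<longleftrightarrow> bit k n \<noteq> (n = e)" for k n
    by (auto simp: \<sigma>_def bit_simps)
  have \<sigma>_\<sigma>: "\<sigma> (\<sigma> k) = k" for k
    by (rule bit_eqI) (auto simp: bit_\<sigma>)
  have \<sigma>_less: "\<sigma> k < 2 ^ m" if "k < 2 ^ m" for k
  proof -
    have "take_bit m k = k" "take_bit m (2 ^ e :: nat) = 2 ^ e"
      using that assms(1) by (simp_all add: take_bit_nat_eq_self_iff)
    then have "take_bit m (\<sigma> k) = \<sigma> k"
      by (simp add: \<sigma>_def)
    then show ?thesis by (simp add: take_bit_nat_eq_self_iff)
  qed
  have "(\<Sum>k<2^m. g k) = (\<Sum>k<2^m. g (\<sigma> k))"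
    by (rule sum.reindex_bij_witness[where i=\<sigma> and j=\<sigma>]) (auto simp: \<sigma>_\<sigma> \<sigma>_less)
  also have "\<dots> = (\<Sum>k<2^m. - g k)"
    using False by (intro sum.cong refl) (simp add: g_def dyadic_sign_def bit_\<sigma>)
  also have "\<dots> = - (\<Sum>k<2^m. g k)"
    by (simp add: sum_negf)
  finally show ?thesis using False by (simp add: g_def)
qed simp

lemma blinfun_apply_sum_scaleR:
  fixes a :: "nat \<Rightarrow> ('a::real_normed_vector \<Rightarrow>\<^sub>L real)" and b :: "nat \<Rightarrow> 'a"
  shows "blinfun_apply (\<Sum>i\<in>I. c i *\<^sub>R a i) (\<Sum>j\<in>J. d j *\<^sub>R b j)
       = (\<Sum>i\<in>I. \<Sum>j\<in>J. (c i * d j) * blinfun_apply (a i) (b j))"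
  by (simp add: blinfun.sum_left blinfun.sum_right blinfun.scaleR_left blinfun.scaleR_right
      sum_distrib_left mult.assoc) (subst sum.swap, simp add: mult.left_commute)

lemma sum_dyadic_sign_pairing:
  fixes a :: "nat \<Rightarrow> ('a::real_normed_vector \<Rightarrow>\<^sub>L real)" and b :: "nat \<Rightarrow> 'a"
  shows "(\<Sum>k<2^m. blinfun_apply (\<Sum>i=1..m. dyadic_sign (m - i) k *\<^sub>R a i)
                                   (\<Sum>j=1..m. dyadic_sign (m - j) k *\<^sub>R b j))
       = 2 ^ m * (\<Sum>i=1..m. blinfun_apply (a i) (b i))"
proof -
  have orth: "(\<Sum>k<2^m. dyadic_sign (m - i) k * dyadic_sign (m - j) k) = (if i = j then 2 ^ m else 0)"
    if "i \<in> {1..m}" "j \<in> {1..m}" for i j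
  proof -
    have "m - i < m" "m - j < m" "m - i = m - j \<longleftrightarrow> i = j"
      using that by auto
    then show ?thesis by (simp add: sum_dyadic_sign_mult)
  qed
  have "(\<Sum>k<2^m. blinfun_apply (\<Sum>i=1..m. dyadic_sign (m - i) k *\<^sub>R a i)
                                 (\<Sum>j=1..m. dyadic_sign (m - j) k *\<^sub>R b j))
      = (\<Sum>i=1..m. \<Sum>j=1..m. (\<Sum>k<2^m. dyadic_sign (m - i) k * dyadic_sign (m - j) k)
                              * blinfun_apply (a i) (b j))"
    by (simp only: blinfun_apply_sum_scaleR sum.swap[of _ "{..<2^m}"] sum_distrib_right)
  also have "\<dots> = (\<Sum>i=1..m. \<Sum>j=1..m. (if i = j then 2 ^ m * blinfun_apply (a i) (b j) else 0))"
    by (intro sum.cong refl) (simp add: orth)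
  also have "\<dots> = 2 ^ m * (\<Sum>i=1..m. blinfun_apply (a i) (b i))"
    by (simp add: sum_distrib_left)
  finally show ?thesis .
qed

lemma sum_blinfun_apply_le_rad_avg:
  fixes a :: "nat \<Rightarrow> ('a::real_normed_vector \<Rightarrow>\<^sub>L real)" and b :: "nat \<Rightarrow> 'a"
  shows "(\<Sum>i=1..m. blinfun_apply (a i) (b i)) \<le> rad_avg a m * rad_avg b m"
proof -
  define N :: real where "N = 2 ^ m"
  define A where "A k = (\<Sum>i=1..m. dyadic_sign (m - i) k *\<^sub>R a i)" for k
  define B where "B k = (\<Sum>i=1..m. dyadic_sign (m - i) k *\<^sub>R b i)" for k
  have "N > 0" by (simp add: N_def)
  have "N * (\<Sum>i=1..m. blinfun_apply (a i) (b i)) = (\<Sum>k<2^m. blinfun_apply (A k) (B k))"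
    unfolding A_def B_def N_def by (rule sum_dyadic_sign_pairing[symmetric])
  also have "\<dots> \<le> (\<Sum>k<2^m. norm (A k) * norm (B k))"
    by (intro sum_mono) (metis abs_ge_self norm_blinfun order_trans real_norm_def)
  also have "\<dots> \<le> sqrt ((\<Sum>k<2^m. norm (A k) * norm (B k))\<^sup>2)"
    by simp
  also have "\<dots> \<le> sqrt ((\<Sum>k<2^m. (norm (A k))\<^sup>2) * (\<Sum>k<2^m. (norm (B k))\<^sup>2))"
    by (rule real_sqrt_le_mono) (rule Cauchy_Schwarz_ineq_sum)
  also have "\<dots> = N * (sqrt ((\<Sum>k<2^m. (norm (A k))\<^sup>2) / N) * sqrt ((\<Sum>k<2^m. (norm (B k))\<^sup>2) / N))"
    using \<open>N > 0\<close> by (simp add: real_sqrt_divide real_sqrt_mult)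
  also have "\<dots> = N * (rad_avg a m * rad_avg b m)"
    unfolding rad_avg_eq_dyadic_average A_def B_def N_def ..
  finally show ?thesis using \<open>N > 0\<close> by simp
qed

text \<open>Sequences in \<open>\<ell>\<^sub>p\<close> are indexed from \<open>0\<close>, whereas \<^const>\<open>rad_avg\<close> and the truncations in
  \<^const>\<open>almost_summing\<close> use the indices \<open>1..m\<close>; hence the shift \<open>i - 1\<close> here and below.\<close>

lemma sum_abs_blinfun_apply_le_rad_avg:
  fixes a :: "nat \<Rightarrow> ('a::real_normed_vector \<Rightarrow>\<^sub>L real)" and x :: "nat \<Rightarrow> 'a"
  shows "(\<Sum>i<m. \<bar>blinfun_apply (a i) (x i)\<bar>)
       \<le> rad_avg (\<lambda>i. a (i - 1)) m
         * rad_avg (\<lambda>i. sgn (blinfun_apply (a (i - 1)) (x (i - 1))) *\<^sub>R x (i - 1)) m"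
proof -
  have "\<bar>blinfun_apply (a i) (x i)\<bar> = blinfun_apply (a i) (sgn (blinfun_apply (a i) (x i)) *\<^sub>R x i)"
    for i by (simp add: blinfun.scaleR_right abs_sgn mult.commute)
  then have "(\<Sum>i<m. \<bar>blinfun_apply (a i) (x i)\<bar>)
      = (\<Sum>i=1..m. blinfun_apply (a (i - 1)) (sgn (blinfun_apply (a (i - 1)) (x (i - 1))) *\<^sub>R x (i - 1)))"
    by (simp add: sum.atLeast1_atMost_eq)
  also have "\<dots> \<le> rad_avg (\<lambda>i. a (i - 1)) m
      * rad_avg (\<lambda>i. sgn (blinfun_apply (a (i - 1)) (x (i - 1))) *\<^sub>R x (i - 1)) m"
    by (rule sum_blinfun_apply_le_rad_avg)
  finally show ?thesis .
qed

lemma seq_norm_shift_trunc_le: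
  assumes "s > 0"
  shows "seq_norm s (\<lambda>i. if i \<in> {1..m} then a (i - 1) else 0) \<le> seq_norm s a"
proof (cases s)
  case PInf
  have "ereal \<bar>if i \<in> {1..m} then a (i - 1) else 0\<bar> \<le> (SUP i. ereal \<bar>a i\<bar>)" for i
    using SUP_upper[of "i - 1" UNIV "\<lambda>i. ereal \<bar>a i\<bar>"] SUP_upper[of 0 UNIV "\<lambda>i. ereal \<bar>a i\<bar>"]
    by (auto intro: order_trans[rotated])
  then show ?thesis using PInf by (simp add: seq_norm_def SUP_least)
next
  case (real r)
  with assms have "r > 0" by simp
  define c where "c i = (if i \<in> {1..m} then a (i - 1) else 0)" for i
  have c_zero: "\<bar>c i\<bar> powr r = 0" if "i \<notin> {1..m}" for i
    using that by (auto simp: c_def)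
  have "summable (\<lambda>i. \<bar>c i\<bar> powr r)"
    by (rule summable_finite[of "{1..m}"]) (use c_zero in auto)
  moreover have "(\<Sum>i. \<bar>c i\<bar> powr r) = (\<Sum>i<m. \<bar>a i\<bar> powr r)"
    using c_zero by (subst suminf_finite[of "{1..m}"]) (auto simp: c_def sum.atLeast1_atMost_eq)
  moreover have "(\<Sum>i<m. \<bar>a i\<bar> powr r) powr (1 / r) \<le> (\<Sum>i. \<bar>a i\<bar> powr r) powr (1 / r)"
    if "summable (\<lambda>i. \<bar>a i\<bar> powr r)"
    using \<open>r > 0\<close> by (intro powr_mono2 sum_le_suminf[OF that] sum_nonneg) auto
  ultimately show ?thesis
    using real \<open>r > 0\<close> by (simp add: seq_norm_def c_def[abs_def])
qed (use assms in simp)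

lemma weak_norm_shift_trunc_le:
  assumes "s > 0"
  shows "weak_norm s (\<lambda>i. if i \<in> {1..m} then x (i - 1) else 0) \<le> weak_norm s x"
  unfolding weak_norm_def
proof (rule SUP_mono)
  fix f :: "'a \<Rightarrow>\<^sub>L real" assume "f \<in> {f. norm f \<le> 1}"
  moreover have "(\<lambda>i. blinfun_apply f (if i \<in> {1..m} then x (i - 1) else 0))
      = (\<lambda>i. if i \<in> {1..m} then blinfun_apply f (x (i - 1)) else 0)"
    by auto
  ultimately show "\<exists>g\<in>{f. norm f \<le> 1}.
      seq_norm s (\<lambda>i. blinfun_apply f (if i \<in> {1..m} then x (i - 1) else 0))
      \<le> seq_norm s (\<lambda>i. blinfun_apply g (x i))"
    using seq_norm_shift_trunc_le[OF assms, of m "\<lambda>i. blinfun_apply f (x i)"] by auto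
qed

lemma conj_exp_pos: "p \<ge> 1 \<Longrightarrow> conj_exp p > 0"
  by (simp add: conj_exp_def)

lemma rad_avg_le_of_almost_summing:
  fixes v :: "'a::real_normed_vector \<Rightarrow> 'b::real_normed_vector"
  assumes "almost_summing s v" "s > 0"
  obtains C where "C \<ge> 0" "\<And>x m. weak_norm s (x :: nat \<Rightarrow> 'a) \<le> 1 \<Longrightarrow> rad_avg (\<lambda>i. v (x (i - 1))) m \<le> C"
proof -
  obtain C where C: "C \<ge> 0"
    "\<And>m x. ereal (rad_avg (\<lambda>i. v (x i)) m) \<le> ereal C * weak_norm s (\<lambda>i. if i \<in> {1..m} then x i else 0)"
    using assms(1) unfolding almost_summing_def by blast
  show ?thesis
  proof (rule that)
    show "C \<ge> 0" by fact
    fix x :: "nat \<Rightarrow> 'a" and m assume "weak_norm s x \<le> 1"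
    have "ereal (rad_avg (\<lambda>i. v (x (i - 1))) m)
        \<le> ereal C * weak_norm s (\<lambda>i. if i \<in> {1..m} then x (i - 1) else 0)"
      by (rule C(2))
    also have "\<dots> \<le> ereal C * 1"
      using weak_norm_shift_trunc_le[OF assms(2)] \<open>weak_norm s x \<le> 1\<close> \<open>C \<ge> 0\<close>
      by (intro ereal_mult_left_mono) (auto intro: order_trans)
    finally show "rad_avg (\<lambda>i. v (x (i - 1))) m \<le> C" by simp
  qed
qed

lemma rad_avg_le_of_has_type:
  assumes "has_type TYPE('a::real_normed_vector) p" "p > 0"
  obtains C where "C \<ge> 0" "\<And>x c m. summable (\<lambda>i. norm (x i :: 'a) powr p) \<Longrightarrow> (\<And>i. \<bar>c i\<bar> \<le> 1) \<Longrightarrow>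
      rad_avg (\<lambda>i. c i *\<^sub>R x (i - 1)) m \<le> C * (\<Sum>i. norm (x i) powr p) powr (1 / p)"
proof -
  obtain C where C: "C \<ge> 0"
    "\<And>m (x :: nat \<Rightarrow> 'a). rad_avg x m \<le> C * (\<Sum>i=1..m. norm (x i) powr p) powr (1 / p)"
    using assms(1) unfolding has_type_def by blast
  show ?thesis
  proof (rule that)
    show "C \<ge> 0" by fact
    fix x :: "nat \<Rightarrow> 'a" and c :: "nat \<Rightarrow> real" and m
    assume x: "summable (\<lambda>i. norm (x i) powr p)" and c: "\<And>i. \<bar>c i\<bar> \<le> 1"
    have "(\<Sum>i=1..m. norm (c i *\<^sub>R x (i - 1)) powr p) \<le> (\<Sum>i=1..m. norm (x (i - 1)) powr p)"
      using c \<open>p > 0\<close> by (intro sum_mono powr_mono2) (auto intro: mult_left_le_one_le)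
    also have "\<dots> = (\<Sum>i<m. norm (x i) powr p)"
      by (simp add: sum.atLeast1_atMost_eq)
    also have "\<dots> \<le> (\<Sum>i. norm (x i) powr p)"
      by (rule sum_le_suminf[OF x]) auto
    finally have "(\<Sum>i=1..m. norm (c i *\<^sub>R x (i - 1)) powr p) powr (1 / p)
        \<le> (\<Sum>i. norm (x i) powr p) powr (1 / p)"
      using \<open>p > 0\<close> by (intro powr_mono2) (auto intro: sum_nonneg)
    then show "rad_avg (\<lambda>i. c i *\<^sub>R x (i - 1)) m \<le> C * (\<Sum>i. norm (x i) powr p) powr (1 / p)"
      using C(2)[of "\<lambda>i. c i *\<^sub>R x (i - 1)" m] \<open>C \<ge> 0\<close> by (auto intro: order_trans mult_left_mono)
  qed
qed

lemma in_cohen_lpI: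
  fixes B :: real
  assumes "\<And>ys m. weak_norm (conj_exp p) ys \<le> 1 \<Longrightarrow> (\<Sum>i<m. \<bar>blinfun_apply (ys i) (y i)\<bar>) \<le> B"
  shows "in_cohen_lp p y"
proof -
  have "(if summable (\<lambda>i. \<bar>blinfun_apply (ys i) (y i)\<bar>)
         then ereal (\<Sum>i. \<bar>blinfun_apply (ys i) (y i)\<bar>) else \<infinity>) \<le> ereal B"
    if "weak_norm (conj_exp p) ys \<le> 1" for ys
  proof -
    have "summable (\<lambda>i. \<bar>blinfun_apply (ys i) (y i)\<bar>)"
    proof (rule bounded_imp_summable)
      show "(\<Sum>k\<le>n. \<bar>blinfun_apply (ys k) (y k)\<bar>) \<le> B" for n
        using assms[OF that, of "Suc n"] unfolding lessThan_Suc_atMost .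
    qed simp
    with assms[OF that] show ?thesis by (simp add: suminf_le_const)
  qed
  then have "(SUP ys\<in>{ys. weak_norm (conj_exp p) ys \<le> 1}.
      (if summable (\<lambda>i. \<bar>blinfun_apply (ys i) (y i)\<bar>)
       then ereal (\<Sum>i. \<bar>blinfun_apply (ys i) (y i)\<bar>) else \<infinity>)) \<le> ereal B"
    by (intro SUP_least) auto
  then show ?thesis unfolding in_cohen_lp_def by (rule le_less_trans) simp
qed

theorem corollary2p3:
  fixes p :: real and u :: "'a::banach \<Rightarrow>\<^sub>L 'b::banach"
  assumes "1 \<le> p" and "p \<le> 2"
    and "has_type TYPE('a) p"
    and "almost_summing (conj_exp p) (\<lambda>y' :: 'b \<Rightarrow>\<^sub>L real. y' o\<^sub>L u)"
  shows "cohen_strongly_summing p u"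
proof -
  have "p > 0" using assms(1) by simp
  obtain C\<^sub>t where C\<^sub>t: "C\<^sub>t \<ge> 0" "\<And>x c m. summable (\<lambda>i. norm (x i :: 'a) powr p) \<Longrightarrow> (\<And>i. \<bar>c i\<bar> \<le> 1) \<Longrightarrow>
      rad_avg (\<lambda>i. c i *\<^sub>R x (i - 1)) m \<le> C\<^sub>t * (\<Sum>i. norm (x i) powr p) powr (1 / p)"
    using rad_avg_le_of_has_type[OF assms(3) \<open>p > 0\<close>] by blast
  obtain C\<^sub>a where C\<^sub>a: "C\<^sub>a \<ge> 0"
    "\<And>ys m. weak_norm (conj_exp p) (ys :: nat \<Rightarrow> ('b \<Rightarrow>\<^sub>L real)) \<le> 1 \<Longrightarrow> rad_avg (\<lambda>i. ys (i - 1) o\<^sub>L u) m \<le> C\<^sub>a"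
    using rad_avg_le_of_almost_summing[OF assms(4) conj_exp_pos[OF assms(1)]] by blast
  show ?thesis unfolding cohen_strongly_summing_def in_lp_def
  proof (intro allI impI in_cohen_lpI)
    fix x :: "nat \<Rightarrow> 'a" and ys :: "nat \<Rightarrow> ('b \<Rightarrow>\<^sub>L real)" and m
    assume x: "summable (\<lambda>i. norm (x i) powr p)" and ys: "weak_norm (conj_exp p) ys \<le> 1"
    define a where "a i = ys i o\<^sub>L u" for i
    define b where "b i = sgn (blinfun_apply (a (i - 1)) (x (i - 1))) *\<^sub>R x (i - 1)" for i
    have "(\<Sum>i<m. \<bar>blinfun_apply (ys i) (u (x i))\<bar>) \<le> rad_avg (\<lambda>i. a (i - 1)) m * rad_avg b m"
      using sum_abs_blinfun_apply_le_rad_avg[of a x m] unfolding a_def b_def by simp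
    also have "\<dots> \<le> C\<^sub>a * (C\<^sub>t * (\<Sum>i. norm (x i) powr p) powr (1 / p))"
      unfolding a_def b_def
      by (intro mult_mono C\<^sub>a(2)[OF ys] C\<^sub>t(2)[OF x] C\<^sub>a(1) rad_avg_nonneg) (simp add: abs_sgn_eq)
    finally show "(\<Sum>i<m. \<bar>blinfun_apply (ys i) (u (x i))\<bar>)
        \<le> C\<^sub>a * (C\<^sub>t * (\<Sum>i. norm (x i) powr p) powr (1 / p))" .
  qed
qed

end
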